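(* Let $x_k\in\mathbb{R}^n_{\ge0}$ satisfy $Ax_k\le(1+\epsilon)\mathbf 1$, let $t\in\{0,\dots,w-1\}$, and let $B_t=\{i:\xi^{(t)}_k[i]\ne 0\}$. Then for every $\tau\in[0,1]$ and $x=\tau x_k+(1-\tau)x^{(t)}_{k+1}$, and every $i\in B_t$, the value $\nabla_i f_\mu(x)$ lies between $\frac12\nabla_i f_\mu(x_k)$ and $\frac32\nabla_i f_\mu(x_k)$ (in particular it has the same sign as $\nabla_i f_\mu(x_k)$).
   Context: Standing setup: $A\in\mathbb{R}^{m\times n}_{\ge 0}$, $\epsilon\in(0,1/2]$, $\log$ is the natural logarithm unless written $\log_2$. $\mu=\frac{\epsilon}{4\log(nm/\epsilon)}$, $p_j(x)=\exp\big(\frac{1}{\mu}((Ax)_j-1)\big)$, $f_\mu(x)=-\mathbf 1^Tx+\mu\sum_{j=1}^m p_j(x)$, with gradient $\nabla_i f_\mu(x)=-1+\sum_j A_{ji}p_j(x)\ge -1$. Set $\alpha=\mu/20$ and $w=\lceil\log_2(1/\epsilon)\rceil$. Given $x_k\ge 0$, write $g_i=\nabla_i f_\mu(x_k)$ and define $\xi_k[i]=0$ if $|g_i|\le\epsilon$, $\xi_k[i]=g_i$ if $\epsilon<|g_i|\le1$, $\xi_k[i]=1$ if $g_i>1$; for $t\in\{0,\dots,w-1\}$, $\xi^{(t)}_k[i]=\xi_k[i]$ if $\epsilon2^t<|\xi_k[i]|\le\epsilon2^{t+1}$ and $0$ otherwise; and $x^{(t)}_{k+1}[i]=x_k[i]\exp(-\alpha\xi^{(t)}_k[i])$.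 *)

theory Defs
  imports "HOL-Analysis.Analysis"
begin

text \<open>Matrix A :: real^'n^'m (m rows, n columns); vectors x :: real^'n.
  n = CARD('n), m = CARD('m).\<close>

definition mu_param :: "real \<Rightarrow> nat \<Rightarrow> nat \<Rightarrow> real" where
  "mu_param eps n m = eps / (4 * ln (real (n * m) / eps))"

definition pj :: "real \<Rightarrow> real^'n^'m \<Rightarrow> real^'n \<Rightarrow> 'm \<Rightarrow> real" where
  "pj mu A x j = exp ((1 / mu) * ((A *v x) $ j - 1))"

definition f_mu :: "real \<Rightarrow> real^'n^'m \<Rightarrow> real^'n \<Rightarrow> real" where
  "f_mu mu A x = - (\<Sum>i\<in>UNIV. x $ i) + mu * (\<Sum>j\<in>UNIV. pj mu A x j)"

definition grad_f :: "real \<Rightarrow> real^'n^'m \<Rightarrow> real^'n \<Rightarrow> 'n \<Rightarrow> real" where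
  "grad_f mu A x i = -1 + (\<Sum>j\<in>UNIV. A $ j $ i * pj mu A x j)"

text \<open>Truncated gradient coordinate; gradient is always \<ge> -1 so cases are exhaustive.\<close>
definition xi_trunc :: "real \<Rightarrow> real \<Rightarrow> real" where
  "xi_trunc eps g = (if \<bar>g\<bar> \<le> eps then 0 else if \<bar>g\<bar> \<le> 1 then g else if g > 1 then 1 else g)"

definition xi_bucket :: "real \<Rightarrow> nat \<Rightarrow> real \<Rightarrow> real" where
  "xi_bucket eps t v = (if eps * 2 ^ t < \<bar>v\<bar> \<and> \<bar>v\<bar> \<le> eps * 2 ^ (t + 1) then v else 0)"

definition w_param :: "real \<Rightarrow> nat" where
  "w_param eps = nat \<lceil>log 2 (1 / eps)\<rceil>"

end

theory Submission
  imports Defs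
begin

text \<open>Fix \<open>i \<in> B\<^sub>t\<close> and let \<open>s = |\<xi>\<^sup>(\<^sup>t\<^sup>)\<^sub>k[i]|\<close>. All nonzero entries of one bucket agree up to a
  factor 2, so along the segment every coordinate of \<open>x\<^sub>k\<close> is rescaled by a factor within
  \<open>exp(\<mu>s/10) - 1\<close> of 1. As \<open>A \<ge> 0\<close> and \<open>Ax\<^sub>k \<le> 3/2\<close>, each \<open>(Ax)\<^sub>j\<close> then moves by at most \<open>\<mu>s/6\<close>,
  so each \<open>p\<^sub>j\<close>, and with them \<open>\<nabla>\<^sub>i f\<^sub>\<mu> + 1 = \<Sum>\<^sub>j A\<^sub>j\<^sub>i p\<^sub>j\<close>, changes by a factor in
  \<open>[exp(-s/6), exp(s/6)]\<close>. Since \<open>s \<le> min(|\<nabla>\<^sub>i f\<^sub>\<mu>(x\<^sub>k)|, 1)\<close>, the resulting error is at most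
  half of \<open>|\<nabla>\<^sub>i f\<^sub>\<mu>(x\<^sub>k)|\<close>.\<close>

lemma mu_param_bounds:
  assumes "0 < eps" "eps \<le> 1 / 2" "0 < n" "0 < m"
  shows "0 < mu_param eps n m" "mu_param eps n m \<le> eps / 2"
proof -
  have "1 \<le> real (n * m)"
    using assms(3,4) by (metis One_nat_def Suc_leI nat_0_less_mult_iff of_nat_1 of_nat_le_iff)
  then have "2 \<le> real (n * m) / eps"
    using assms(1,2) by (simp add: field_simps)
  then have "2 \<le> 4 * ln (real (n * m) / eps)"
    using exp_half_le2 ln_ge_iff[of "real (n * m) / eps" "1 / 2"] by simp
  then show "0 < mu_param eps n m" "mu_param eps n m \<le> eps / 2"
    using assms(1) divide_left_mono[of 2 "4 * ln (real (n * m) / eps)" eps]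
    unfolding mu_param_def by simp_all
qed

lemma grad_f_ge_minus_one:
  assumes "\<forall>j i. A $ j $ i \<ge> 0"
  shows "-1 \<le> grad_f mu A x i"
  using assms unfolding grad_f_def pj_def by (simp add: sum_nonneg)

lemma abs_xi_trunc_le: "\<bar>xi_trunc eps g\<bar> \<le> \<bar>g\<bar>"
  by (simp add: xi_trunc_def)

lemma abs_xi_trunc_le_one: "-1 \<le> g \<Longrightarrow> \<bar>xi_trunc eps g\<bar> \<le> 1"
  by (simp add: xi_trunc_def)

lemma abs_xi_bucket_le: "\<bar>xi_bucket eps t v\<bar> \<le> \<bar>v\<bar>"
  by (simp add: xi_bucket_def)

lemma abs_xi_bucket_le_double:
  "xi_bucket eps t v \<noteq> 0 \<Longrightarrow> \<bar>xi_bucket eps t u\<bar> \<le> 2 * \<bar>xi_bucket eps t v\<bar>"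
  by (auto simp: xi_bucket_def split: if_splits)

lemma abs_exp_minus_one_le: "\<bar>exp y - 1\<bar> \<le> exp \<bar>y\<bar> - (1::real)"
proof (cases "y \<ge> 0")
  case False
  have "\<bar>exp y - 1\<bar> = 1 - exp y" using False by simp
  also have "\<dots> \<le> exp (- y) - 1"
    using exp_ge_add_one_self[of y] exp_ge_add_one_self[of "- y"] by linarith
  finally show ?thesis using False by simp
qed simp

lemma abs_convex_exp_minus_one_le:
  assumes "\<tau> \<in> {0..1::real}"
  shows "\<bar>\<tau> + (1 - \<tau>) * exp y - 1\<bar> \<le> exp \<bar>y\<bar> - 1"
proof -
  have "\<tau> + (1 - \<tau>) * exp y - 1 = (1 - \<tau>) * (exp y - 1)"
    by (simp add: algebra_simps)
  then have "\<bar>\<tau> + (1 - \<tau>) * exp y - 1\<bar> = (1 - \<tau>) * \<bar>exp y - 1\<bar>"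
    using assms by (simp add: abs_mult)
  also have "\<dots> \<le> \<bar>exp y - 1\<bar>"
    using assms by (simp add: mult_left_le_one_le)
  finally show ?thesis using abs_exp_minus_one_le[of y] by linarith
qed

lemma matrix_vector_mult_rescale_diff:
  fixes A :: "real^'n^'m" and x :: "real^'n"
  assumes "\<forall>j i. A $ j $ i \<ge> 0" "\<forall>l. x $ l \<ge> 0" "\<forall>l. \<bar>c l - 1\<bar> \<le> \<eta>"
  shows "\<bar>(A *v (\<chi> l. x $ l * c l)) $ j - (A *v x) $ j\<bar> \<le> \<eta> * (A *v x) $ j"
proof -
  have "\<bar>(A *v (\<chi> l. x $ l * c l)) $ j - (A *v x) $ j\<bar>
        = \<bar>\<Sum>l\<in>UNIV. A $ j $ l * x $ l * (c l - 1)\<bar>"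
    by (simp add: matrix_vector_mult_def sum_subtractf[symmetric] algebra_simps)
  also have "\<dots> \<le> (\<Sum>l\<in>UNIV. \<bar>A $ j $ l * x $ l * (c l - 1)\<bar>)"
    by (rule sum_abs)
  also have "\<dots> \<le> (\<Sum>l\<in>UNIV. A $ j $ l * x $ l * \<eta>)"
    using assms by (intro sum_mono) (simp add: abs_mult mult_left_mono)
  also have "\<dots> = \<eta> * (A *v x) $ j"
    by (simp add: matrix_vector_mult_def sum_distrib_left algebra_simps)
  finally show ?thesis .
qed

lemma matrix_vector_mult_segment_shift:
  fixes A :: "real^'n^'m" and x :: "real^'n"
  assumes "\<forall>j i. A $ j $ i \<ge> 0" "\<forall>l. x $ l \<ge> 0" "\<tau> \<in> {0..1}" "\<forall>l. \<bar>a l\<bar> \<le> \<delta>"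
  shows "\<bar>(A *v (\<tau> *\<^sub>R x + (1 - \<tau>) *\<^sub>R (\<chi> l. x $ l * exp (a l)))) $ j - (A *v x) $ j\<bar>
           \<le> (exp \<delta> - 1) * (A *v x) $ j"
proof -
  have "exp \<bar>a l\<bar> - 1 \<le> exp \<delta> - 1" for l
    using assms(4) by simp
  then have "\<bar>\<tau> + (1 - \<tau>) * exp (a l) - 1\<bar> \<le> exp \<delta> - 1" for l
    using abs_convex_exp_minus_one_le[OF assms(3)] order.trans by blast
  moreover have "\<tau> *\<^sub>R x + (1 - \<tau>) *\<^sub>R (\<chi> l. x $ l * exp (a l)) = (\<chi> l. x $ l * (\<tau> + (1 - \<tau>) * exp (a l)))"
    by (simp add: vec_eq_iff algebra_simps)
  ultimately show ?thesis
    using matrix_vector_mult_rescale_diff[OF assms(1,2)] by simp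
qed

lemma pj_shift:
  assumes "mu \<noteq> 0"
  shows "pj mu A y j = pj mu A x j * exp (((A *v y) $ j - (A *v x) $ j) / mu)"
  using assms by (simp add: pj_def flip: exp_add) (simp add: field_simps)

lemma grad_f_plus_one_shift_bounds:
  assumes A_nonneg: "\<forall>j i. A $ j $ i \<ge> 0" and "0 < mu"
    and shift: "\<forall>j. \<bar>(A *v y) $ j - (A *v x) $ j\<bar> \<le> mu * K"
  shows "(grad_f mu A x i + 1) * exp (- K) \<le> grad_f mu A y i + 1"
    and "grad_f mu A y i + 1 \<le> (grad_f mu A x i + 1) * exp K"
proof -
  define e where "e j = exp (((A *v y) $ j - (A *v x) $ j) / mu)" for j
  have grad_y: "grad_f mu A y i + 1 = (\<Sum>j\<in>UNIV. A $ j $ i * pj mu A x j * e j)"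
    using \<open>0 < mu\<close> by (simp add: grad_f_def e_def pj_shift[of mu A y _ x] mult.assoc)
  have grad_x: "grad_f mu A x i + 1 = (\<Sum>j\<in>UNIV. A $ j $ i * pj mu A x j)"
    by (simp add: grad_f_def)
  have weight_nonneg: "0 \<le> A $ j $ i * pj mu A x j" for j
    using A_nonneg by (simp add: pj_def)
  have "- K \<le> ((A *v y) $ j - (A *v x) $ j) / mu \<and> ((A *v y) $ j - (A *v x) $ j) / mu \<le> K" for j
    using shift[rule_format, of j] \<open>0 < mu\<close>
    by (simp add: abs_le_iff pos_le_divide_eq pos_divide_le_eq mult_ac)
  then have "exp (- K) \<le> e j" "e j \<le> exp K" for j
    unfolding e_def by simp_all
  then show "(grad_f mu A x i + 1) * exp (- K) \<le> grad_f mu A y i + 1"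
    and "grad_f mu A y i + 1 \<le> (grad_f mu A x i + 1) * exp K"
    unfolding grad_x grad_y sum_distrib_right
    by (auto intro!: sum_mono mult_left_mono weight_nonneg)
qed

lemma exp_step_le:
  fixes mu s :: real
  assumes "0 < mu" "mu \<le> 1 / 4" "0 \<le> s" "s \<le> 1"
  shows "3 / 2 * (exp (mu * s / 10) - 1) \<le> mu * (s / 6)"
proof -
  define \<delta> where "\<delta> = mu * s / 10"
  have "0 \<le> \<delta>" "\<delta> \<le> 1 / 40"
    using assms mult_mono[of mu "1/4" s 1] by (auto simp: \<delta>_def)
  then have "exp \<delta> \<le> 1 + \<delta> + \<delta>\<^sup>2" "\<delta>\<^sup>2 \<le> \<delta> / 40"
    using exp_bound[of \<delta>] mult_left_mono[of \<delta> "1/40" \<delta>] by (auto simp: power2_eq_square)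
  then show ?thesis
    using \<open>0 \<le> \<delta>\<close> by (simp add: \<delta>_def)
qed

lemma within_half_of_gradient:
  fixes g y s :: real
  assumes "-1 \<le> g" "0 \<le> s" "s \<le> \<bar>g\<bar>" "s \<le> 1"
    and lower: "(g + 1) * exp (- (s / 6)) \<le> y + 1"
    and upper: "y + 1 \<le> (g + 1) * exp (s / 6)"
  shows "min (g / 2) (3 * g / 2) \<le> y \<and> y \<le> max (g / 2) (3 * g / 2)"
proof -
  define K where "K = s / 6"
  have "0 \<le> K" "K \<le> 1 / 6" "K \<le> \<bar>g\<bar> / 6" "0 \<le> g + 1" using assms by (simp_all add: K_def)
  have "1 - K \<le> exp (- K)" using exp_ge_add_one_self[of "- K"] by simp
  then have lo: "(g + 1) * (1 - K) \<le> y + 1"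
    using lower mult_left_mono[OF _ \<open>0 \<le> g + 1\<close>] unfolding K_def by fastforce
  have "exp K \<le> 1 + K + K\<^sup>2" "K\<^sup>2 \<le> K / 6"
    using exp_bound[of K] mult_left_mono[of K "1/6" K] \<open>0 \<le> K\<close> \<open>K \<le> 1/6\<close>
    by (auto simp: power2_eq_square)
  then have "exp K \<le> 1 + 7 / 6 * K" by simp
  then have up: "y + 1 \<le> (g + 1) * (1 + 7 / 6 * K)"
    using upper mult_left_mono[OF _ \<open>0 \<le> g + 1\<close>] unfolding K_def by fastforce
  have "K * (g + 1) \<le> \<bar>g\<bar> / 3"
  proof (cases "0 \<le> g")
    case True
    then have "K * g \<le> g / 6" using mult_right_mono[OF \<open>K \<le> 1/6\<close>] by simp
    then show ?thesis using \<open>0 \<le> g\<close> \<open>K \<le> \<bar>g\<bar> / 6\<close> by (simp add: algebra_simps)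
  next
    case False
    then have "K * (g + 1) \<le> K" using \<open>0 \<le> K\<close> by (simp add: mult_left_le)
    then show ?thesis using \<open>K \<le> \<bar>g\<bar> / 6\<close> by linarith
  qed
  moreover have "g - K * (g + 1) \<le> y" "y \<le> g + 7 / 6 * (K * (g + 1))"
    using lo up by (simp_all add: algebra_simps)
  ultimately show ?thesis by (cases "0 \<le> g") auto
qed

theorem lemma3p3:
  fixes A :: "real^'n^'m" and xk :: "real^'n" and eps :: real and t :: nat
  defines "mu \<equiv> mu_param eps CARD('n) CARD('m)"
  defines "alpha \<equiv> mu / 20"
  defines "xi \<equiv> (\<lambda>i. xi_bucket eps t (xi_trunc eps (grad_f mu A xk i)))"
  defines "xnext \<equiv> (\<chi> i. xk $ i * exp (- alpha * xi i))"
  defines "B \<equiv> {i. xi i \<noteq> 0}"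
  assumes A_nonneg: "\<forall>j i. A $ j $ i \<ge> 0"
    and eps_pos: "0 < eps" and eps_le: "eps \<le> 1 / 2"
    and xk_nonneg: "\<forall>i. xk $ i \<ge> 0"
    and feas: "\<forall>j. (A *v xk) $ j \<le> 1 + eps"
    and t_lt: "t < w_param eps"
  shows "\<forall>\<tau>\<in>{0..1::real}. \<forall>i\<in>B.
     let x = \<tau> *\<^sub>R xk + (1 - \<tau>) *\<^sub>R xnext;
         g = grad_f mu A xk i
     in min (g / 2) (3 * g / 2) \<le> grad_f mu A x i \<and> grad_f mu A x i \<le> max (g / 2) (3 * g / 2)"
proof (intro ballI)
  fix \<tau> i assume \<tau>: "\<tau> \<in> {0..1::real}" and "i \<in> B"
  define g where "g = grad_f mu A xk i"
  define s where "s = \<bar>xi i\<bar>"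
  define \<eta> where "\<eta> = exp (mu * s / 10) - 1"
  have "0 < mu" "mu \<le> 1 / 4"
    using mu_param_bounds[OF eps_pos eps_le zero_less_card_finite[where 'a='n] zero_less_card_finite[where 'a='m]] eps_le
    by (simp_all add: mu_def)
  have "-1 \<le> g" using grad_f_ge_minus_one[OF A_nonneg] by (simp add: g_def)
  have "s \<le> \<bar>xi_trunc eps g\<bar>" using abs_xi_bucket_le by (simp add: s_def xi_def g_def)
  then have "s \<le> \<bar>g\<bar>" "s \<le> 1"
    using abs_xi_trunc_le abs_xi_trunc_le_one[OF \<open>-1 \<le> g\<close>] order.trans by blast+
  have "\<bar>xi l\<bar> \<le> 2 * s" for l
    using \<open>i \<in> B\<close> abs_xi_bucket_le_double by (simp add: B_def xi_def s_def)
  then have "\<bar>- alpha * xi l\<bar> \<le> mu * s / 10" for l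
    using \<open>0 < mu\<close> mult_left_mono[of "\<bar>xi l\<bar>" "2 * s" alpha]
    by (simp add: alpha_def abs_mult)
  then have "\<bar>(A *v (\<tau> *\<^sub>R xk + (1 - \<tau>) *\<^sub>R xnext)) $ j - (A *v xk) $ j\<bar> \<le> \<eta> * (A *v xk) $ j" for j
    using matrix_vector_mult_segment_shift[OF A_nonneg xk_nonneg \<tau>, of "\<lambda>l. - alpha * xi l"]
    by (simp add: xnext_def \<eta>_def)
  moreover have "\<eta> * (A *v xk) $ j \<le> \<eta> * (3 / 2)" for j
    using feas[rule_format, of j] eps_le \<open>0 < mu\<close> by (intro mult_left_mono) (auto simp: \<eta>_def s_def)
  moreover have "\<eta> * (3 / 2) \<le> mu * (s / 6)"
    using exp_step_le[OF \<open>0 < mu\<close> \<open>mu \<le> 1/4\<close> _ \<open>s \<le> 1\<close>] by (simp add: \<eta>_def s_def)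
  ultimately have "\<forall>j. \<bar>(A *v (\<tau> *\<^sub>R xk + (1 - \<tau>) *\<^sub>R xnext)) $ j - (A *v xk) $ j\<bar> \<le> mu * (s / 6)"
    by (meson order.trans)
  from grad_f_plus_one_shift_bounds[OF A_nonneg \<open>0 < mu\<close> this]
  show "let x = \<tau> *\<^sub>R xk + (1 - \<tau>) *\<^sub>R xnext; g = grad_f mu A xk i
     in min (g / 2) (3 * g / 2) \<le> grad_f mu A x i \<and> grad_f mu A x i \<le> max (g / 2) (3 * g / 2)"
    using within_half_of_gradient[OF \<open>-1 \<le> g\<close> _ \<open>s \<le> \<bar>g\<bar>\<close> \<open>s \<le> 1\<close>]
    by (simp add: Let_def g_def s_def)
qed
end
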